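(* Let $A\subset[0,1]$ be a measurable set with $|A|<1$. Then there exist pairwise disjoint sets $Z_j\subset\mathbb{Z}$, $j\in\mathbb{N}$, such that for every $j$ the exponential system $\{e^{-2\pi i n t}: n\in Z_j\}$ is complete in $L^2(A)$.
   Context: $|A|$ denotes Lebesgue measure. A system of functions is complete in $L^2(A)$ if its linear span is dense in $L^2(A)$. *)

theory Defs
  imports "HOL-Analysis.Analysis"
begin

definition expo :: "int \<Rightarrow> real \<Rightarrow> complex" where
  "expo n t = exp (- 2 * of_real pi * \<i> * of_int n * of_real t)"

definition complete_L2 :: "real set \<Rightarrow> int set \<Rightarrow> bool" where
  "complete_L2 A Z \<longleftrightarrow>
    (\<forall>f :: real \<Rightarrow> complex.
       f \<in> borel_measurable (restrict_space lebesgue A) \<and>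
       (\<integral>\<^sup>+ t. ennreal ((cmod (f t))\<^sup>2) \<partial>(restrict_space lebesgue A)) < \<infinity> \<longrightarrow>
       (\<forall>\<epsilon>>0. \<exists>F c. finite F \<and> F \<subseteq> Z \<and>
          (\<integral>\<^sup>+ t. ennreal ((cmod (f t - (\<Sum>n\<in>F. c n * expo n t)))\<^sup>2)
              \<partial>(restrict_space lebesgue A)) < ennreal \<epsilon>))"

end

theory Submission
  imports Defs "HOL-Computational_Algebra.Polynomial"
begin

(* Trigonometric polynomials are dense in L^2(X) for every measurable subset X of [0,1]
   (simple functions, then indicators of closed sets, then continuous functions
   on the circle and Stone-Weierstrass).

   Let B = [0,1] - A, which has positive measure. A nonzero trigonometric polynomial
   has only finitely many zeros in [0,1], so for every finite F there are bounded
   functions supported in B that are biorthogonal to the exponentials e_k, k in F.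
   Correcting 1_A e_n by these gives a function equal to e_n on A and orthogonal to
   every e_k, k in F. Approximate it in L^2[0,1] by a trigonometric polynomial: the
   coefficients with index in F are inner products of the error with e_k, hence
   small, and may be dropped. So e_n is approximated on A by exponentials avoiding
   any prescribed finite set of frequencies.

   Enumerating all triples (j, n, precision) and choosing, one after the other,
   finite frequency sets disjoint from all earlier ones yields the disjoint Z_j. *)

section \<open>Exponentials and trigonometric polynomials\<close>

lemma expo_add: "expo a t * expo b t = expo (a + b) t"
  unfolding expo_def by (simp add: exp_add[symmetric] algebra_simps)

lemma norm_expo [simp]: "cmod (expo n t) = 1"
  unfolding expo_def by (simp add: norm_exp_eq_Re)

lemma cnj_expo: "cnj (expo n t) = expo (- n) t"
  unfolding expo_def by (simp add: exp_cnj)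

lemma expo_0 [simp]: "expo 0 t = 1"
  unfolding expo_def by simp

lemma continuous_on_expo [continuous_intros]: "continuous_on S (expo n)"
  unfolding expo_def by (intro continuous_intros)

lemma expo_minus_one: "expo (-1) t = exp (2 * of_real pi * \<i> * of_real t)"
  unfolding expo_def by simp

lemma expo_minus_one_power: "expo (-1) t ^ n * expo N t = expo (N - int n) t"
proof (induction n)
  case (Suc n)
  have "expo (-1) t ^ Suc n * expo N t = expo (-1) t * (expo (-1) t ^ n * expo N t)"
    by (simp add: mult.assoc)
  also have "\<dots> = expo (N - int (Suc n)) t"
    unfolding Suc expo_add by (simp add: algebra_simps)
  finally show ?case .
qed simp

lemma inj_on_expo_minus_one: "inj_on (expo (-1)) {0..<1}"
proof (rule inj_onI)
  fix s t :: real
  assume s: "s \<in> {0..<1}" and t: "t \<in> {0..<1}" and eq: "expo (-1) s = expo (-1) t"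
  have "2 * pi * \<bar>s - t\<bar> < 2 * pi * 1"
    using s t by (intro mult_strict_left_mono) auto
  then have "\<bar>Im (2 * of_real pi * \<i> * of_real s) - Im (2 * of_real pi * \<i> * (of_real t :: complex))\<bar> < 2 * pi"
    by (simp add: abs_mult right_diff_distrib[symmetric])
  moreover have "exp (2 * of_real pi * \<i> * of_real s) = exp (2 * of_real pi * \<i> * (of_real t :: complex))"
    using eq by (simp only: expo_minus_one)
  ultimately have "2 * of_real pi * \<i> * of_real s = 2 * of_real pi * \<i> * (of_real t :: complex)"
    by (rule exp_complex_eqI)
  then show "s = t" by simp
qed

lemma expo_minus_one_notin_image:
  assumes K: "K \<subseteq> {0..1}" and t: "t \<in> {0<..<1}" "t \<notin> K"
  shows "expo (-1) t \<notin> expo (-1) ` K"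
proof
  assume "expo (-1) t \<in> expo (-1) ` K"
  then obtain s where s: "s \<in> K" "expo (-1) s = expo (-1) t" by auto
  show False
  proof (cases "s = 1")
    case True
    then have "expo (-1) 0 = expo (-1) t"
      using s(2) by (simp add: expo_minus_one)
    then show False
      using inj_onD[OF inj_on_expo_minus_one] t by force
  next
    case False
    then have "s = t"
      using inj_onD[OF inj_on_expo_minus_one s(2)] s(1) K t by auto
    then show False using s(1) t by simp
  qed
qed

text \<open>Multiplying by a power of \<open>expo N\<close> turns a trigonometric sum into a polynomial
  in \<open>expo (-1) t\<close>, which winds once around the circle as \<open>t\<close> runs through \<open>[0,1)\<close>.\<close>
lemma trig_sum_zeros_finite:
  fixes c :: "int \<Rightarrow> complex"
  assumes F: "finite F" "m \<in> F" "c m \<noteq> 0"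
  shows "finite {t\<in>{0..1}. (\<Sum>k\<in>F. c k * expo k t) = 0}"
proof -
  define N where "N = Max F"
  have kN: "k \<le> N" if "k \<in> F" for k
    using F that by (simp add: N_def)
  define p where "p = (\<Sum>k\<in>F. monom (c k) (nat (N - k)))"
  have sum_eq: "(\<Sum>k\<in>F. c k * expo k t) = poly p (expo (-1) t) * expo N t" for t
  proof -
    have "poly p (expo (-1) t) * expo N t = (\<Sum>k\<in>F. c k * (expo (-1) t ^ nat (N - k) * expo N t))"
      unfolding p_def poly_sum poly_monom sum_distrib_right by (simp add: mult.assoc)
    also have "\<dots> = (\<Sum>k\<in>F. c k * expo k t)"
      by (intro sum.cong refl) (simp add: expo_minus_one_power kN)
    finally show ?thesis by simp
  qed
  have "coeff p (nat (N - m)) = (\<Sum>k\<in>F. if k = m then c k else 0)"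
    unfolding p_def coeff_sum coeff_monom
    by (intro sum.cong refl) (use kN F(2) in \<open>auto simp: nat_eq_iff\<close>)
  then have "coeff p (nat (N - m)) = c m"
    using F by simp
  then have "p \<noteq> 0"
    using F(3) by auto
  have "{t\<in>{0..1}. (\<Sum>k\<in>F. c k * expo k t) = 0} \<subseteq> insert 1 (expo (-1) -` {z. poly p z = 0} \<inter> {0..<1})"
  proof
    fix t assume "t \<in> {t\<in>{0..1}. (\<Sum>k\<in>F. c k * expo k t) = 0}"
    moreover have "expo N t \<noteq> 0"
      using norm_expo[of N t] by (metis norm_zero zero_neq_one)
    ultimately show "t \<in> insert 1 (expo (-1) -` {z. poly p z = 0} \<inter> {0..<1})"
      using sum_eq[of t] by auto
  qed
  moreover have "finite (insert 1 (expo (-1) -` {z. poly p z = 0} \<inter> {0..<1}))"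
    using finite_vimage_IntI[OF poly_roots_finite[OF \<open>p \<noteq> 0\<close>] inj_on_expo_minus_one] by simp
  ultimately show ?thesis
    by (rule finite_subset)
qed

definition trig_poly :: "int set \<Rightarrow> (real \<Rightarrow> complex) \<Rightarrow> bool" where
  "trig_poly S f \<longleftrightarrow> (\<exists>F c. finite F \<and> F \<subseteq> S \<and> f = (\<lambda>t. \<Sum>n\<in>F. c n * expo n t))"

lemma trig_poly_expo: "n \<in> S \<Longrightarrow> trig_poly S (expo n)"
  unfolding trig_poly_def by (intro exI[of _ "{n}"] exI[of _ "\<lambda>_. 1"]) auto

lemma trig_poly_zero: "trig_poly S (\<lambda>t. 0)"
  unfolding trig_poly_def by (intro exI[of _ "{}"]) auto

lemma trig_poly_mono: "trig_poly S f \<Longrightarrow> S \<subseteq> T \<Longrightarrow> trig_poly T f"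
  unfolding trig_poly_def by blast

lemma trig_poly_add:
  assumes "trig_poly S f" "trig_poly S g"
  shows "trig_poly S (\<lambda>t. f t + g t)"
proof -
  obtain F c where F: "finite F" "F \<subseteq> S" "f = (\<lambda>t. \<Sum>n\<in>F. c n * expo n t)"
    using assms(1) trig_poly_def by auto
  obtain G d where G: "finite G" "G \<subseteq> S" "g = (\<lambda>t. \<Sum>n\<in>G. d n * expo n t)"
    using assms(2) trig_poly_def by auto
  define c' where "c' n = (if n \<in> F then c n else 0)" for n
  define d' where "d' n = (if n \<in> G then d n else 0)" for n
  have "f t = (\<Sum>n\<in>F \<union> G. c' n * expo n t)" "g t = (\<Sum>n\<in>F \<union> G. d' n * expo n t)" for t
    unfolding F(3) G(3) c'_def d'_def
    by (rule sum.mono_neutral_cong_left; use F G in auto)+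
  then have "(\<lambda>t. f t + g t) = (\<lambda>t. \<Sum>n\<in>F \<union> G. (c' n + d' n) * expo n t)"
    by (simp add: distrib_right sum.distrib)
  then show ?thesis
    unfolding trig_poly_def using F(1,2) G(1,2) by (intro exI[of _ "F \<union> G"] exI[of _ "\<lambda>n. c' n + d' n"]) simp
qed

lemma trig_poly_cmult:
  assumes "trig_poly S f"
  shows "trig_poly S (\<lambda>t. a * f t)"
proof -
  obtain F c where F: "finite F" "F \<subseteq> S" "f = (\<lambda>t. \<Sum>n\<in>F. c n * expo n t)"
    using assms trig_poly_def by auto
  then show ?thesis
    unfolding trig_poly_def
    by (intro exI[of _ F] exI[of _ "\<lambda>n. a * c n"]) (simp add: sum_distrib_left mult.assoc)
qed

lemma trig_poly_sum:
  "finite I \<Longrightarrow> (\<And>i. i \<in> I \<Longrightarrow> trig_poly S (f i)) \<Longrightarrow> trig_poly S (\<lambda>t. \<Sum>i\<in>I. f i t)"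
  by (induction I rule: finite_induct) (auto intro: trig_poly_zero trig_poly_add)

lemma trig_poly_mult:
  assumes "trig_poly UNIV f" "trig_poly UNIV g"
  shows "trig_poly UNIV (\<lambda>t. f t * g t)"
proof -
  obtain F c where F: "finite F" "f = (\<lambda>t. \<Sum>n\<in>F. c n * expo n t)"
    using assms(1) trig_poly_def by auto
  obtain G d where G: "finite G" "g = (\<lambda>t. \<Sum>n\<in>G. d n * expo n t)"
    using assms(2) trig_poly_def by auto
  have "(\<lambda>t. f t * g t) = (\<lambda>t. \<Sum>a\<in>F. \<Sum>b\<in>G. (c a * d b) * expo (a + b) t)"
    unfolding F G by (simp add: sum_product expo_add[symmetric] algebra_simps)
  moreover have "trig_poly UNIV (\<lambda>t. \<Sum>a\<in>F. \<Sum>b\<in>G. (c a * d b) * expo (a + b) t)"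
    by (intro trig_poly_sum trig_poly_cmult trig_poly_expo F G) auto
  ultimately show ?thesis by simp
qed

lemma trig_poly_continuous_on: "trig_poly S f \<Longrightarrow> continuous_on X f"
  unfolding trig_poly_def by (auto intro!: continuous_intros)

lemma trig_poly_measurable:
  "trig_poly S f \<Longrightarrow> X \<in> sets lebesgue \<Longrightarrow> f \<in> borel_measurable (lebesgue_on X)"
  by (intro continuous_imp_measurable_on_sets_lebesgue trig_poly_continuous_on)

lemma trig_poly_bounded: "trig_poly S f \<Longrightarrow> \<exists>C. \<forall>t. cmod (f t) \<le> C"
proof -
  assume "trig_poly S f"
  then obtain F c where F: "f = (\<lambda>t. \<Sum>n\<in>F. c n * expo n t)"
    using trig_poly_def by auto
  have "cmod (f t) \<le> (\<Sum>n\<in>F. cmod (c n))" for t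
    unfolding F by (rule order_trans[OF norm_sum]) (simp add: norm_mult)
  then show ?thesis by blast
qed

lemma trig_poly_real_polynomial_function:
  assumes "real_polynomial_function p"
  shows "trig_poly UNIV (\<lambda>t. complex_of_real (p (expo (-1) t)))"
  using assms
proof induction
  case (linear p)
  have p_eq: "p z = Re z * p 1 + Im z * p \<i>" for z
  proof -
    have "p (Re z *\<^sub>R 1 + Im z *\<^sub>R \<i>) = Re z * p 1 + Im z * p \<i>"
      using linear by (simp only: linear_simps real_scaleR_def)
    moreover have "Re z *\<^sub>R 1 + Im z *\<^sub>R \<i> = z"
      by (simp add: complex_eq_iff)
    ultimately show ?thesis by simp
  qed
  have re: "complex_of_real (Re z) = (z + cnj z) / 2" and im: "complex_of_real (Im z) = (z - cnj z) / (2 * \<i>)" for z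
    by (simp_all add: complex_eq_iff)
  let ?a = "of_real (p 1) / 2 + of_real (p \<i>) / (2 * \<i>)" and ?b = "of_real (p 1) / 2 - of_real (p \<i>) / (2 * \<i>)"
  have "(\<lambda>t. complex_of_real (p (expo (-1) t))) = (\<lambda>t. ?a * expo (-1) t + ?b * expo 1 t)"
  proof
    fix t
    have "(u + w) / 2 * a + (u - w) / (2 * \<i>) * b = (a / 2 + b / (2 * \<i>)) * u + (a / 2 - b / (2 * \<i>)) * w"
      for u w a b :: complex
      by (simp add: field_simps)
    then show "complex_of_real (p (expo (-1) t)) = ?a * expo (-1) t + ?b * expo 1 t"
      unfolding p_eq[of "expo (-1) t"] of_real_add of_real_mult re im cnj_expo minus_minus .
  qed
  moreover have "trig_poly UNIV (\<lambda>t. ?a * expo (-1) t + ?b * expo 1 t)"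
    by (intro trig_poly_add trig_poly_cmult trig_poly_expo) auto
  ultimately show ?case by simp
next
  case (const c)
  show ?case
    using trig_poly_cmult[OF trig_poly_expo[of 0 UNIV], of "of_real c"] by simp
next
  case (add f g)
  show ?case using trig_poly_add[OF add.IH] by simp
next
  case (mult f g)
  show ?case using trig_poly_mult[OF mult.IH] by simp
qed

lemma uniform_approx_circle_trig_poly:
  fixes G :: "complex \<Rightarrow> real"
  assumes "continuous_on (sphere 0 1) G" "\<epsilon> > 0"
  shows "\<exists>P. trig_poly UNIV P \<and> (\<forall>t. cmod (of_real (G (expo (-1) t)) - P t) < \<epsilon>)"
proof -
  obtain g where g: "polynomial_function g" "\<forall>z\<in>sphere 0 1. norm (G z - g z) < \<epsilon>"
    using Stone_Weierstrass_polynomial_function[OF compact_sphere assms] by blast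
  have "trig_poly UNIV (\<lambda>t. complex_of_real (g (expo (-1) t)))"
    using trig_poly_real_polynomial_function g(1) by (simp add: real_polynomial_function_eq)
  moreover have "cmod (of_real (G (expo (-1) t)) - of_real (g (expo (-1) t))) < \<epsilon>" for t
    using g(2) by (simp flip: of_real_diff)
  ultimately show ?thesis by blast
qed

section \<open>Approximation in \<open>L\<^sup>2\<close> by trigonometric polynomials\<close>

definition L2_sqdist :: "real measure \<Rightarrow> (real \<Rightarrow> complex) \<Rightarrow> (real \<Rightarrow> complex) \<Rightarrow> ennreal" where
  "L2_sqdist M f g = (\<integral>\<^sup>+t. ennreal ((cmod (f t - g t))\<^sup>2) \<partial>M)"

lemma norm_add_squared_le: "(cmod (u + v))\<^sup>2 \<le> 2 * (cmod u)\<^sup>2 + 2 * (cmod v)\<^sup>2"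
proof -
  have "(cmod (u + v))\<^sup>2 \<le> (cmod u + cmod v)\<^sup>2"
    by (simp add: power_mono norm_triangle_ineq)
  also have "\<dots> \<le> 2 * (cmod u)\<^sup>2 + 2 * (cmod v)\<^sup>2"
    using zero_le_power2[of "cmod u - cmod v"] by (simp add: power2_eq_square algebra_simps)
  finally show ?thesis .
qed

lemma nn_integral_norm_add_squared_le:
  assumes [measurable]: "u \<in> borel_measurable M" "v \<in> borel_measurable M"
  shows "(\<integral>\<^sup>+t. ennreal ((cmod (u t + v t))\<^sup>2) \<partial>M) \<le>
     2 * (\<integral>\<^sup>+t. ennreal ((cmod (u t))\<^sup>2) \<partial>M) + 2 * (\<integral>\<^sup>+t. ennreal ((cmod (v t))\<^sup>2) \<partial>M)"
proof -
  have "(\<integral>\<^sup>+t. ennreal ((cmod (u t + v t))\<^sup>2) \<partial>M) \<le>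
        (\<integral>\<^sup>+t. 2 * ennreal ((cmod (u t))\<^sup>2) + 2 * ennreal ((cmod (v t))\<^sup>2) \<partial>M)"
  proof (rule nn_integral_mono)
    fix t
    have "ennreal ((cmod (u t + v t))\<^sup>2) \<le> ennreal (2 * (cmod (u t))\<^sup>2 + 2 * (cmod (v t))\<^sup>2)"
      by (rule ennreal_leI[OF norm_add_squared_le])
    then show "ennreal ((cmod (u t + v t))\<^sup>2) \<le> 2 * ennreal ((cmod (u t))\<^sup>2) + 2 * ennreal ((cmod (v t))\<^sup>2)"
      by (simp add: ennreal_plus ennreal_mult)
  qed
  also have "\<dots> = 2 * (\<integral>\<^sup>+t. ennreal ((cmod (u t))\<^sup>2) \<partial>M) + 2 * (\<integral>\<^sup>+t. ennreal ((cmod (v t))\<^sup>2) \<partial>M)"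
    by (simp add: nn_integral_add nn_integral_cmult)
  finally show ?thesis .
qed

lemma L2_sqdist_triangle:
  assumes [measurable]: "f \<in> borel_measurable M" "g \<in> borel_measurable M" "h \<in> borel_measurable M"
  shows "L2_sqdist M f h \<le> 2 * L2_sqdist M f g + 2 * L2_sqdist M g h"
  using nn_integral_norm_add_squared_le[of "\<lambda>t. f t - g t" M "\<lambda>t. g t - h t"]
  unfolding L2_sqdist_def by simp

lemma L2_sqdist_add:
  assumes [measurable]: "f \<in> borel_measurable M" "g \<in> borel_measurable M"
    "P \<in> borel_measurable M" "Q \<in> borel_measurable M"
  shows "L2_sqdist M (\<lambda>t. f t + g t) (\<lambda>t. P t + Q t) \<le> 2 * L2_sqdist M f P + 2 * L2_sqdist M g Q"
  using nn_integral_norm_add_squared_le[of "\<lambda>t. f t - P t" M "\<lambda>t. g t - Q t"]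
  unfolding L2_sqdist_def by (simp add: algebra_simps)

lemma L2_sqdist_cmult:
  assumes [measurable]: "f \<in> borel_measurable M" "g \<in> borel_measurable M"
  shows "L2_sqdist M (\<lambda>t. a * f t) (\<lambda>t. a * g t) = ennreal ((cmod a)\<^sup>2) * L2_sqdist M f g"
proof -
  have "L2_sqdist M (\<lambda>t. a * f t) (\<lambda>t. a * g t) =
      (\<integral>\<^sup>+t. ennreal ((cmod a)\<^sup>2) * ennreal ((cmod (f t - g t))\<^sup>2) \<partial>M)"
    unfolding L2_sqdist_def
    by (intro nn_integral_cong)
      (simp add: ennreal_mult[symmetric] right_diff_distrib[symmetric] norm_mult power_mult_distrib)
  then show ?thesis
    unfolding L2_sqdist_def by (simp add: nn_integral_cmult)
qed

lemma L2_sqdist_le_uniform: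
  assumes "emeasure M (space M) \<le> 1" and "\<And>t. cmod (f t - g t) \<le> r"
  shows "L2_sqdist M f g \<le> ennreal (r\<^sup>2)"
proof -
  have "L2_sqdist M f g \<le> (\<integral>\<^sup>+t. ennreal (r\<^sup>2) \<partial>M)"
    unfolding L2_sqdist_def
    using assms(2) by (intro nn_integral_mono ennreal_leI power_mono) auto
  also have "\<dots> = ennreal (r\<^sup>2) * emeasure M (space M)"
    by simp
  also have "\<dots> \<le> ennreal (r\<^sup>2) * 1"
    using assms(1) by (intro mult_left_mono) auto
  finally show ?thesis by simp
qed

lemma L2_sqdist_restrict_mono:
  assumes "A \<in> sets lebesgue" "X \<in> sets lebesgue" "A \<subseteq> X"
  shows "L2_sqdist (lebesgue_on A) f g \<le> L2_sqdist (lebesgue_on X) f g"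
  unfolding L2_sqdist_def using assms
  by (simp add: nn_integral_restrict_space)
    (intro nn_integral_mono mult_left_mono; auto simp: indicator_def)

definition trig_approx :: "int set \<Rightarrow> real measure \<Rightarrow> (real \<Rightarrow> complex) \<Rightarrow> bool" where
  "trig_approx S M f \<longleftrightarrow> (\<forall>\<epsilon>>0. \<exists>g. trig_poly S g \<and> L2_sqdist M f g < ennreal \<epsilon>)"

lemma ennreal_fifths_sum_less:
  assumes "(\<epsilon>::real) > 0"
  shows "2 * ennreal (\<epsilon> / 5) + 2 * ennreal (\<epsilon> / 5) < ennreal \<epsilon>"
proof -
  have two: "2 * ennreal (\<epsilon> / 5) = ennreal (2 * (\<epsilon> / 5))"
    using assms by (subst ennreal_mult) auto
  have "2 * ennreal (\<epsilon> / 5) + 2 * ennreal (\<epsilon> / 5) = ennreal (2 * (\<epsilon> / 5) + 2 * (\<epsilon> / 5))"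
    unfolding two using assms by (subst ennreal_plus) auto
  also have "\<dots> < ennreal \<epsilon>"
    using assms by (subst ennreal_less_iff) auto
  finally show ?thesis .
qed

lemma trig_approx_trig_poly: "trig_poly S f \<Longrightarrow> trig_approx S M f"
  unfolding trig_approx_def L2_sqdist_def by (intro allI impI exI[of _ f]) auto

lemma trig_approx_cong:
  assumes "\<And>t. t \<in> space M \<Longrightarrow> f t = g t" "trig_approx S M g"
  shows "trig_approx S M f"
proof -
  have "L2_sqdist M f h = L2_sqdist M g h" for h
    unfolding L2_sqdist_def using assms(1) by (intro nn_integral_cong) simp
  then show ?thesis
    using assms(2) unfolding trig_approx_def by simp
qed

lemma trig_approx_restrict:
  assumes "A \<in> sets lebesgue" "X \<in> sets lebesgue" "A \<subseteq> X" "trig_approx S (lebesgue_on X) f"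
  shows "trig_approx S (lebesgue_on A) f"
  using assms(4) L2_sqdist_restrict_mono[OF assms(1-3)] unfolding trig_approx_def
  by (meson order_le_less_trans)

lemma trig_approx_limit:
  assumes X: "X \<in> sets lebesgue" and f: "f \<in> borel_measurable (lebesgue_on X)"
    and approx: "\<And>\<epsilon>. \<epsilon> > 0 \<Longrightarrow> \<exists>g. g \<in> borel_measurable (lebesgue_on X) \<and>
        trig_approx S (lebesgue_on X) g \<and> L2_sqdist (lebesgue_on X) f g < ennreal \<epsilon>"
  shows "trig_approx S (lebesgue_on X) f"
  unfolding trig_approx_def
proof (intro allI impI)
  fix \<epsilon> :: real
  assume "\<epsilon> > 0"
  then obtain g where g: "g \<in> borel_measurable (lebesgue_on X)" "trig_approx S (lebesgue_on X) g"
      "L2_sqdist (lebesgue_on X) f g < ennreal (\<epsilon> / 5)"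
    using approx[of "\<epsilon> / 5"] by auto
  obtain P where P: "trig_poly S P" "L2_sqdist (lebesgue_on X) g P < ennreal (\<epsilon> / 5)"
    using g(2) \<open>\<epsilon> > 0\<close> unfolding trig_approx_def by (meson zero_less_divide_iff zero_less_numeral)
  have "L2_sqdist (lebesgue_on X) f P \<le> 2 * L2_sqdist (lebesgue_on X) f g + 2 * L2_sqdist (lebesgue_on X) g P"
    by (rule L2_sqdist_triangle[OF f g(1) trig_poly_measurable[OF P(1) X]])
  also have "\<dots> \<le> 2 * ennreal (\<epsilon> / 5) + 2 * ennreal (\<epsilon> / 5)"
    using g(3) P(2) by (intro add_mono mult_left_mono) auto
  also have "\<dots> < ennreal \<epsilon>"
    using \<open>\<epsilon> > 0\<close> by (rule ennreal_fifths_sum_less)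
  finally show "\<exists>g. trig_poly S g \<and> L2_sqdist (lebesgue_on X) f g < ennreal \<epsilon>"
    using P(1) by blast
qed

lemma trig_approx_add:
  assumes X: "X \<in> sets lebesgue"
    and f: "f \<in> borel_measurable (lebesgue_on X)" "trig_approx S (lebesgue_on X) f"
    and g: "g \<in> borel_measurable (lebesgue_on X)" "trig_approx S (lebesgue_on X) g"
  shows "trig_approx S (lebesgue_on X) (\<lambda>t. f t + g t)"
  unfolding trig_approx_def
proof (intro allI impI)
  fix \<epsilon> :: real
  assume "\<epsilon> > 0"
  then have "\<epsilon> / 5 > 0" by simp
  then obtain P Q where P: "trig_poly S P" "L2_sqdist (lebesgue_on X) f P < ennreal (\<epsilon> / 5)"
    and Q: "trig_poly S Q" "L2_sqdist (lebesgue_on X) g Q < ennreal (\<epsilon> / 5)"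
    using f(2) g(2) unfolding trig_approx_def by blast
  have "L2_sqdist (lebesgue_on X) (\<lambda>t. f t + g t) (\<lambda>t. P t + Q t)
      \<le> 2 * L2_sqdist (lebesgue_on X) f P + 2 * L2_sqdist (lebesgue_on X) g Q"
    by (rule L2_sqdist_add[OF f(1) g(1) trig_poly_measurable[OF P(1) X] trig_poly_measurable[OF Q(1) X]])
  also have "\<dots> \<le> 2 * ennreal (\<epsilon> / 5) + 2 * ennreal (\<epsilon> / 5)"
    using P(2) Q(2) by (intro add_mono mult_left_mono) auto
  also have "\<dots> < ennreal \<epsilon>"
    using \<open>\<epsilon> > 0\<close> by (rule ennreal_fifths_sum_less)
  finally show "\<exists>h. trig_poly S h \<and> L2_sqdist (lebesgue_on X) (\<lambda>t. f t + g t) h < ennreal \<epsilon>"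
    using trig_poly_add[OF P(1) Q(1)] by blast
qed

lemma trig_approx_cmult:
  assumes X: "X \<in> sets lebesgue"
    and f: "f \<in> borel_measurable (lebesgue_on X)" "trig_approx S (lebesgue_on X) f"
  shows "trig_approx S (lebesgue_on X) (\<lambda>t. a * f t)"
  unfolding trig_approx_def
proof (intro allI impI)
  fix \<epsilon> :: real
  assume "\<epsilon> > 0"
  define k where "k = (cmod a)\<^sup>2"
  have "k \<ge> 0" unfolding k_def by simp
  then obtain P where P: "trig_poly S P" "L2_sqdist (lebesgue_on X) f P < ennreal (\<epsilon> / (k + 1))"
    using f(2) \<open>\<epsilon> > 0\<close> unfolding trig_approx_def by (meson add_nonneg_pos zero_less_divide_iff zero_less_one)
  have "L2_sqdist (lebesgue_on X) (\<lambda>t. a * f t) (\<lambda>t. a * P t) = ennreal k * L2_sqdist (lebesgue_on X) f P"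
    unfolding k_def by (rule L2_sqdist_cmult[OF f(1) trig_poly_measurable[OF P(1) X]])
  also have "\<dots> \<le> ennreal k * ennreal (\<epsilon> / (k + 1))"
    using P(2) by (intro mult_left_mono) auto
  also have "\<dots> = ennreal (k * (\<epsilon> / (k + 1)))"
    using \<open>k \<ge> 0\<close> \<open>\<epsilon> > 0\<close> by (intro ennreal_mult[symmetric]) auto
  also have "\<dots> < ennreal \<epsilon>"
    using \<open>k \<ge> 0\<close> \<open>\<epsilon> > 0\<close> by (subst ennreal_less_iff) (auto simp: field_simps)
  finally show "\<exists>h. trig_poly S h \<and> L2_sqdist (lebesgue_on X) (\<lambda>t. a * f t) h < ennreal \<epsilon>"
    using trig_poly_cmult[OF P(1)] by blast
qed

lemma trig_approx_sum:
  assumes X: "X \<in> sets lebesgue" and "finite I"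
    and "\<And>i. i \<in> I \<Longrightarrow> f i \<in> borel_measurable (lebesgue_on X)"
    and "\<And>i. i \<in> I \<Longrightarrow> trig_approx S (lebesgue_on X) (f i)"
  shows "trig_approx S (lebesgue_on X) (\<lambda>t. \<Sum>i\<in>I. f i t)"
  using assms(2-)
proof (induction I rule: finite_induct)
  case empty
  then show ?case using trig_approx_trig_poly[OF trig_poly_zero] by simp
next
  case (insert i I)
  have sum_meas: "(\<lambda>t. \<Sum>i\<in>I. f i t) \<in> borel_measurable (lebesgue_on X)"
    using insert by (intro borel_measurable_sum) auto
  show ?case
    using trig_approx_add[OF X _ _ sum_meas insert.IH] insert by simp
qed

lemma trig_approx_trans:
  assumes X: "X \<in> sets lebesgue" and f: "f \<in> borel_measurable (lebesgue_on X)" "trig_approx T (lebesgue_on X) f"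
    and expo: "\<And>n. n \<in> T \<Longrightarrow> trig_approx S (lebesgue_on X) (expo n)"
  shows "trig_approx S (lebesgue_on X) f"
proof (rule trig_approx_limit[OF X f(1)])
  fix \<epsilon> :: real
  assume "\<epsilon> > 0"
  then obtain F c where F: "finite F" "F \<subseteq> T"
    and close: "L2_sqdist (lebesgue_on X) f (\<lambda>t. \<Sum>n\<in>F. c n * expo n t) < ennreal \<epsilon>"
    using f(2) unfolding trig_approx_def trig_poly_def by blast
  have expo_meas: "expo n \<in> borel_measurable (lebesgue_on X)" for n
    by (rule trig_poly_measurable[OF trig_poly_expo[of n UNIV] X]) simp
  have "trig_approx S (lebesgue_on X) (\<lambda>t. \<Sum>n\<in>F. c n * expo n t)"
    using F expo_meas expo by (intro trig_approx_sum[OF X] trig_approx_cmult[OF X]) auto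
  then show "\<exists>g. g \<in> borel_measurable (lebesgue_on X) \<and> trig_approx S (lebesgue_on X) g \<and>
      L2_sqdist (lebesgue_on X) f g < ennreal \<epsilon>"
    using close expo_meas by (intro exI[of _ "\<lambda>t. \<Sum>n\<in>F. c n * expo n t"]) auto
qed

lemma emeasure_lebesgue_on_le_1:
  fixes X :: "real set"
  assumes "X \<in> sets lebesgue" "X \<subseteq> {0..1}"
  shows "emeasure (lebesgue_on X) (space (lebesgue_on X)) \<le> 1"
proof -
  have "emeasure (lebesgue_on X) (space (lebesgue_on X)) = emeasure lebesgue X"
    using assms by (simp add: emeasure_restrict_space)
  also have "\<dots> \<le> emeasure lebesgue {0..1::real}"
    using assms emeasure_mono[of X "{0..1::real}" lebesgue] by simp
  finally show ?thesis
    by simp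
qed

lemma trig_approx_uniform:
  assumes X: "X \<in> sets lebesgue" "X \<subseteq> {0..1}"
    and approx: "\<And>\<epsilon>. \<epsilon> > 0 \<Longrightarrow> \<exists>P. trig_poly S P \<and> (\<forall>t. cmod (f t - P t) < \<epsilon>)"
  shows "trig_approx S (lebesgue_on X) f"
  unfolding trig_approx_def
proof (intro allI impI)
  fix \<epsilon> :: real
  assume "\<epsilon> > 0"
  then obtain P where P: "trig_poly S P" "\<And>t. cmod (f t - P t) < sqrt (\<epsilon> / 2)"
    using approx[of "sqrt (\<epsilon> / 2)"] by auto
  have "L2_sqdist (lebesgue_on X) f P \<le> ennreal ((sqrt (\<epsilon> / 2))\<^sup>2)"
    by (rule L2_sqdist_le_uniform[OF emeasure_lebesgue_on_le_1[OF X] less_imp_le[OF P(2)]])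
  also have "\<dots> < ennreal \<epsilon>"
    using \<open>\<epsilon> > 0\<close> by (simp add: ennreal_less_iff)
  finally show "\<exists>g. trig_poly S g \<and> L2_sqdist (lebesgue_on X) f g < ennreal \<epsilon>"
    using P(1) by blast
qed

lemma trig_approx_dominated_limit:
  assumes X: "X \<in> sets lebesgue" and f: "f \<in> borel_measurable (lebesgue_on X)"
    and g: "\<And>i. g i \<in> borel_measurable (lebesgue_on X)" "\<And>i. trig_approx S (lebesgue_on X) (g i)"
    and w: "w \<in> borel_measurable (lebesgue_on X)" "(\<integral>\<^sup>+t. ennreal (w t) \<partial>lebesgue_on X) < \<infinity>"
    and bound: "\<And>i t. t \<in> X \<Longrightarrow> (cmod (f t - g i t))\<^sup>2 \<le> w t"
    and lim: "AE t in lebesgue_on X. (\<lambda>i. g i t) \<longlonglongrightarrow> f t"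
  shows "trig_approx S (lebesgue_on X) f"
proof (rule trig_approx_limit[OF X f])
  have "(\<lambda>i. \<integral>\<^sup>+t. norm (0 - (cmod (f t - g i t))\<^sup>2) \<partial>lebesgue_on X) \<longlonglongrightarrow> 0"
  proof (rule nn_integral_dominated_convergence_norm[OF _ _ w(1) _ w(2)])
    show "(\<lambda>t. (cmod (f t - g i t))\<^sup>2) \<in> borel_measurable (lebesgue_on X)" for i
      using f g(1) by measurable
    show "AE t in lebesgue_on X. norm ((cmod (f t - g i t))\<^sup>2) \<le> w t" for i
      using bound by (intro AE_I2) auto
    show "AE t in lebesgue_on X. (\<lambda>i. (cmod (f t - g i t))\<^sup>2) \<longlonglongrightarrow> 0"
      using lim
    proof eventually_elim
      case (elim t)
      then have "(\<lambda>i. f t - g i t) \<longlonglongrightarrow> f t - f t"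
        by (intro tendsto_intros)
      then have "(\<lambda>i. (cmod (f t - g i t))\<^sup>2) \<longlonglongrightarrow> 0\<^sup>2"
        by (intro tendsto_intros) (simp add: tendsto_norm_zero)
      then show ?case by simp
    qed
  qed simp
  then have "(\<lambda>i. L2_sqdist (lebesgue_on X) f (g i)) \<longlonglongrightarrow> 0"
    by (simp add: L2_sqdist_def)
  moreover fix \<epsilon> :: real
  assume "\<epsilon> > 0"
  ultimately have "eventually (\<lambda>i. L2_sqdist (lebesgue_on X) f (g i) < ennreal \<epsilon>) sequentially"
    by (intro order_tendstoD(2)) auto
  then obtain i where "L2_sqdist (lebesgue_on X) f (g i) < ennreal \<epsilon>"
    by (auto simp: eventually_sequentially)
  then show "\<exists>h. h \<in> borel_measurable (lebesgue_on X) \<and> trig_approx S (lebesgue_on X) h \<and>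
      L2_sqdist (lebesgue_on X) f h < ennreal \<epsilon>"
    using g by blast
qed

section \<open>Density of trigonometric polynomials\<close>

lemma tendsto_infdist_cutoff:
  fixes C :: "'a::metric_space set"
  assumes "closed C" "C \<noteq> {}"
  shows "(\<lambda>i. max 0 (1 - real i * infdist z C)) \<longlonglongrightarrow> (if z \<in> C then 1 else 0)"
proof (cases "z \<in> C")
  case False
  then have "infdist z C > 0"
    using infdist_pos_not_in_closed[OF assms] by blast
  obtain N :: nat where N: "1 / infdist z C \<le> real N"
    using real_arch_simple by blast
  have "max 0 (1 - real i * infdist z C) = 0" if "i \<ge> N" for i
  proof -
    have "1 / infdist z C \<le> real i"
      using N that by (meson of_nat_mono order_trans)
    then have "1 \<le> real i * infdist z C"
      using \<open>infdist z C > 0\<close> by (simp add: pos_divide_le_eq)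
    then show ?thesis
      by simp
  qed
  then show ?thesis
    using False by (intro tendsto_eventually) (auto simp: eventually_sequentially)
qed simp

lemma
  fixes G :: "complex \<Rightarrow> real"
  assumes X: "X \<in> sets lebesgue" "X \<subseteq> {0..1}" and G: "continuous_on UNIV G"
  shows measurable_circle_continuous: "(\<lambda>t. complex_of_real (G (expo (-1) t))) \<in> borel_measurable (lebesgue_on X)"
    and trig_approx_circle_continuous: "trig_approx UNIV (lebesgue_on X) (\<lambda>t. complex_of_real (G (expo (-1) t)))"
proof -
  show "(\<lambda>t. complex_of_real (G (expo (-1) t))) \<in> borel_measurable (lebesgue_on X)"
    by (intro continuous_imp_measurable_on_sets_lebesgue X continuous_intros
        continuous_on_compose2[OF G]) auto
  show "trig_approx UNIV (lebesgue_on X) (\<lambda>t. complex_of_real (G (expo (-1) t)))"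
    using X uniform_approx_circle_trig_poly[OF continuous_on_subset[OF G]]
    by (intro trig_approx_uniform) auto
qed

definition circle_cutoff :: "real set \<Rightarrow> nat \<Rightarrow> real \<Rightarrow> complex" where
  "circle_cutoff K i t = complex_of_real (max 0 (1 - real i * infdist (expo (-1) t) (expo (-1) ` K)))"

lemma
  assumes "X \<in> sets lebesgue" "X \<subseteq> {0..1}"
  shows measurable_circle_cutoff: "circle_cutoff K i \<in> borel_measurable (lebesgue_on X)"
    and trig_approx_circle_cutoff: "trig_approx UNIV (lebesgue_on X) (circle_cutoff K i)"
proof -
  have "continuous_on UNIV (\<lambda>z. max 0 (1 - real i * infdist z (expo (-1) ` K)))"
    by (intro continuous_intros)
  from measurable_circle_continuous[OF assms this] trig_approx_circle_continuous[OF assms this]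
  show "circle_cutoff K i \<in> borel_measurable (lebesgue_on X)"
    and "trig_approx UNIV (lebesgue_on X) (circle_cutoff K i)"
    unfolding circle_cutoff_def[abs_def] by simp_all
qed

lemma norm_indicator_minus_circle_cutoff_le: "(cmod (indicator K t - circle_cutoff K i t))\<^sup>2 \<le> 1"
proof -
  let ?c = "max 0 (1 - real i * infdist (expo (-1) t) (expo (-1) ` K))"
  have "\<bar>indicator K t - ?c\<bar> \<le> 1"
    using infdist_nonneg[of "expo (-1) t" "expo (-1) ` K"] by (auto simp: indicator_def)
  moreover have "indicator K t - circle_cutoff K i t = complex_of_real (indicator K t - ?c)"
    by (simp add: circle_cutoff_def indicator_def)
  then have "cmod (indicator K t - circle_cutoff K i t) = \<bar>indicator K t - ?c\<bar>"
    by (metis norm_of_real)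
  ultimately show ?thesis
    by (simp add: abs_square_le_1)
qed

lemma tendsto_circle_cutoff:
  assumes K: "compact K" "K \<noteq> {}" "K \<subseteq> {0..1}" and t: "t \<in> {0<..<1}"
  shows "(\<lambda>i. circle_cutoff K i t) \<longlonglongrightarrow> indicator K t"
proof -
  have "compact (expo (-1) ` K)"
    using K(1) by (intro compact_continuous_image continuous_intros)
  then have "closed (expo (-1) ` K)"
    by (rule compact_imp_closed)
  moreover have "expo (-1) t \<in> expo (-1) ` K \<longleftrightarrow> t \<in> K"
    using K(3) t expo_minus_one_notin_image[of K t] by blast
  ultimately have "(\<lambda>i. max 0 (1 - real i * infdist (expo (-1) t) (expo (-1) ` K))) \<longlonglongrightarrow> indicator K t"
    using tendsto_infdist_cutoff[of "expo (-1) ` K" "expo (-1) t"] K(2) by (cases "t \<in> K") simp_all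
  then have "(\<lambda>i. circle_cutoff K i t) \<longlonglongrightarrow> complex_of_real (indicator K t)"
    unfolding circle_cutoff_def by (rule tendsto_of_real)
  then show ?thesis
    by (cases "t \<in> K") simp_all
qed

lemma trig_approx_indicator_closed:
  assumes X: "X \<in> sets lebesgue" "X \<subseteq> {0..1}" and K: "closed K" "K \<subseteq> X"
  shows "trig_approx UNIV (lebesgue_on X) (indicator K)"
proof (cases "K = {}")
  case True
  then show ?thesis
    using trig_approx_trig_poly[OF trig_poly_zero] by (simp add: indicator_def[abs_def])
next
  case False
  have "compact K"
    using K X compact_Int_closed[OF compact_Icc K(1), of 0 1] by (simp add: Int_absorb1)
  have "K \<in> sets (lebesgue_on X)"
    using K X by (simp add: sets_restrict_space_iff borel_closed)
  then have K_meas: "(indicator K :: real \<Rightarrow> complex) \<in> borel_measurable (lebesgue_on X)"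
    by simp
  show ?thesis
  proof (rule trig_approx_dominated_limit[OF X(1) K_meas measurable_circle_cutoff[OF X] trig_approx_circle_cutoff[OF X],
        where w = "\<lambda>_. 1"])
    show "(\<integral>\<^sup>+t. ennreal 1 \<partial>lebesgue_on X) < \<infinity>"
      using emeasure_lebesgue_on_le_1[OF X]
      by (simp add: ennreal_top_neq_one[symmetric] order_le_less_trans)
    have "(\<lambda>i. circle_cutoff K i t) \<longlonglongrightarrow> indicator K t" if "t \<in> X" "t \<notin> {0, 1}" for t
      using that X K \<open>compact K\<close> False by (intro tendsto_circle_cutoff) auto
    moreover have "AE t in lebesgue. t \<notin> {0, 1::real}"
      by (rule AE_not_in) simp
    ultimately show "AE t in lebesgue_on X. (\<lambda>i. circle_cutoff K i t) \<longlonglongrightarrow> indicator K t"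
      using X by (subst AE_restrict_space_iff) (auto elim!: AE_mp)
  qed (simp_all add: norm_indicator_minus_circle_cutoff_le)
qed

lemma trig_approx_indicator:
  assumes X: "X \<in> sets lebesgue" "X \<subseteq> {0..1}" and E: "E \<in> sets lebesgue" "E \<subseteq> X"
  shows "trig_approx UNIV (lebesgue_on X) (indicator E)"
proof (rule trig_approx_limit[OF X(1)])
  show "(indicator E :: real \<Rightarrow> complex) \<in> borel_measurable (lebesgue_on X)"
    using X E by (intro borel_measurable_indicator) (auto simp: sets_restrict_space_iff)
  fix \<epsilon> :: real
  assume "\<epsilon> > 0"
  then obtain T where T: "closed T" "T \<subseteq> E" "E - T \<in> lmeasurable" "emeasure lebesgue (E - T) < ennreal \<epsilon>"
    using sets_lebesgue_inner_closed[OF E(1)] by blast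
  have "E - T \<in> sets (lebesgue_on X)"
    using X E T(3) by (auto simp: sets_restrict_space_iff fmeasurableD)
  have "L2_sqdist (lebesgue_on X) (indicator E) (indicator T) = (\<integral>\<^sup>+t. indicator (E - T) t \<partial>lebesgue_on X)"
    unfolding L2_sqdist_def using T(2) by (intro nn_integral_cong) (auto simp: indicator_def)
  also have "\<dots> = emeasure (lebesgue_on X) (E - T)"
    using \<open>E - T \<in> sets (lebesgue_on X)\<close> by simp
  also have "\<dots> = emeasure lebesgue (E - T)"
    using X E by (subst emeasure_restrict_space) auto
  finally have "L2_sqdist (lebesgue_on X) (indicator E) (indicator T) < ennreal \<epsilon>"
    using T(4) by simp
  moreover have "T \<in> sets (lebesgue_on X)"
    using X E T by (simp add: sets_restrict_space_iff borel_closed)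
  moreover have "trig_approx UNIV (lebesgue_on X) (indicator T)"
    using trig_approx_indicator_closed[OF X T(1)] T(2) E(2) by auto
  ultimately show "\<exists>g. g \<in> borel_measurable (lebesgue_on X) \<and> trig_approx UNIV (lebesgue_on X) g \<and>
      L2_sqdist (lebesgue_on X) (indicator E) g < ennreal \<epsilon>"
    by (intro exI[of _ "indicator T"]) auto
qed

lemma trig_approx_simple_function:
  assumes X: "X \<in> sets lebesgue" "X \<subseteq> {0..1}" and s: "simple_function (lebesgue_on X) (s :: real \<Rightarrow> complex)"
  shows "trig_approx UNIV (lebesgue_on X) s"
proof (rule trig_approx_cong)
  have space: "space (lebesgue_on X) = X"
    by simp
  have level_set: "s -` {y} \<inter> X \<in> sets (lebesgue_on X)" for y
    using simple_functionD(2)[OF s, of "{y}"] space by simp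
  show "s t = (\<Sum>y\<in>s ` X. y * indicator (s -` {y} \<inter> X) t)" if "t \<in> space (lebesgue_on X)" for t
  proof -
    have "s t = (\<Sum>y\<in>s ` space (lebesgue_on X). indicator (s -` {y} \<inter> space (lebesgue_on X)) t *\<^sub>R y)"
      by (rule simple_function_indicator_representation_banach[OF s that])
    also have "\<dots> = (\<Sum>y\<in>s ` X. y * indicator (s -` {y} \<inter> X) t)"
      unfolding space by (intro sum.cong) (auto simp: indicator_def)
    finally show ?thesis .
  qed
  have "finite (s ` X)"
    using simple_functionD(1)[OF s] space by simp
  then show "trig_approx UNIV (lebesgue_on X) (\<lambda>t. \<Sum>y\<in>s ` X. y * indicator (s -` {y} \<inter> X) t)"
  proof (rule trig_approx_sum[OF X(1)])
    fix y
    have "(indicator (s -` {y} \<inter> X) :: real \<Rightarrow> complex) \<in> borel_measurable (lebesgue_on X)"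
      by (rule borel_measurable_indicator[OF level_set])
    moreover have "s -` {y} \<inter> X \<in> sets lebesgue"
      using level_set X by (simp add: sets_restrict_space_iff)
    then have "trig_approx UNIV (lebesgue_on X) (indicator (s -` {y} \<inter> X))"
      using X by (intro trig_approx_indicator) auto
    ultimately show "(\<lambda>t. y * indicator (s -` {y} \<inter> X) t) \<in> borel_measurable (lebesgue_on X)"
      and "trig_approx UNIV (lebesgue_on X) (\<lambda>t. y * indicator (s -` {y} \<inter> X) t)"
      by (auto intro: trig_approx_cmult[OF X(1)] borel_measurable_times)
  qed
qed

lemma trig_approx_L2:
  assumes X: "X \<in> sets lebesgue" "X \<subseteq> {0..1}"
    and f[measurable]: "f \<in> borel_measurable (lebesgue_on X)"
    and L2: "(\<integral>\<^sup>+t. ennreal ((cmod (f t))\<^sup>2) \<partial>lebesgue_on X) < \<infinity>"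
  shows "trig_approx UNIV (lebesgue_on X) f"
proof -
  obtain s where s: "\<And>i. simple_function (lebesgue_on X) (s i)"
      "\<And>t. t \<in> space (lebesgue_on X) \<Longrightarrow> (\<lambda>i. s i t) \<longlonglongrightarrow> f t"
      "\<And>i t. t \<in> space (lebesgue_on X) \<Longrightarrow> dist (s i t) 0 \<le> 2 * dist (f t) 0"
    using borel_measurable_implies_sequence_metric[OF f, of 0] by blast
  show ?thesis
  proof (rule trig_approx_dominated_limit[OF X(1) f, where g = s and w = "\<lambda>t. 9 * (cmod (f t))\<^sup>2"])
    show "s i \<in> borel_measurable (lebesgue_on X)" "trig_approx UNIV (lebesgue_on X) (s i)" for i
      using s(1) X by (auto intro: borel_measurable_simple_function trig_approx_simple_function)
    show "(\<lambda>t. 9 * (cmod (f t))\<^sup>2) \<in> borel_measurable (lebesgue_on X)"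
      by measurable
    show "(\<integral>\<^sup>+t. ennreal (9 * (cmod (f t))\<^sup>2) \<partial>lebesgue_on X) < \<infinity>"
      using L2 by (simp add: ennreal_mult nn_integral_cmult ennreal_mult_less_top)
    show "(cmod (f t - s i t))\<^sup>2 \<le> 9 * (cmod (f t))\<^sup>2" if "t \<in> X" for i t
    proof -
      have "cmod (f t - s i t) \<le> 3 * cmod (f t)"
        using norm_triangle_ineq4[of "f t" "s i t"] s(3)[of t i] that by simp
      then have "(cmod (f t - s i t))\<^sup>2 \<le> (3 * cmod (f t))\<^sup>2"
        by (intro power_mono) auto
      then show ?thesis
        by (simp add: power_mult_distrib)
    qed
    show "AE t in lebesgue_on X. (\<lambda>i. s i t) \<longlonglongrightarrow> f t"
      using s(2) by (intro AE_I2) auto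
  qed
qed

section \<open>The inner product of \<open>L\<^sup>2[0,1]\<close>\<close>

abbreviation lebesgue01 :: "real measure" where
  "lebesgue01 \<equiv> lebesgue_on {0..1}"

lemma finite_measure_lebesgue01: "finite_measure lebesgue01"
  by (rule finite_measure_lebesgue_on) simp

lemma emeasure_lebesgue01: "emeasure lebesgue01 (space lebesgue01) = 1"
  by (simp add: emeasure_restrict_space)

definition bounded_measurable :: "(real \<Rightarrow> complex) \<Rightarrow> bool" where
  "bounded_measurable f \<longleftrightarrow> f \<in> borel_measurable lebesgue01 \<and> (\<exists>C. \<forall>t. cmod (f t) \<le> C)"

lemma bounded_measurable_integrable: "bounded_measurable f \<Longrightarrow> integrable lebesgue01 f"
  unfolding bounded_measurable_def
  by (auto intro!: finite_measure.integrable_const_bound[OF finite_measure_lebesgue01] AE_I2)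

lemma bounded_measurable_add:
  assumes "bounded_measurable f" "bounded_measurable g"
  shows "bounded_measurable (\<lambda>t. f t + g t)"
proof -
  obtain C D where "\<And>t. cmod (f t) \<le> C" "\<And>t. cmod (g t) \<le> D"
    using assms unfolding bounded_measurable_def by blast
  then have "cmod (f t + g t) \<le> C + D" for t
    by (meson add_mono norm_triangle_le)
  then show ?thesis
    using assms unfolding bounded_measurable_def by auto
qed

lemma bounded_measurable_mult:
  assumes "bounded_measurable f" "bounded_measurable g"
  shows "bounded_measurable (\<lambda>t. f t * g t)"
proof -
  obtain C D where "\<And>t. cmod (f t) \<le> C" "\<And>t. cmod (g t) \<le> D"
    using assms unfolding bounded_measurable_def by blast
  then have "cmod (f t * g t) \<le> C * D" for t
    unfolding norm_mult by (meson mult_mono norm_ge_zero order_trans)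
  then show ?thesis
    using assms unfolding bounded_measurable_def by auto
qed

lemma bounded_measurable_const: "bounded_measurable (\<lambda>t. a)"
  unfolding bounded_measurable_def by auto

lemma bounded_measurable_cmult: "bounded_measurable f \<Longrightarrow> bounded_measurable (\<lambda>t. a * f t)"
  using bounded_measurable_mult[OF bounded_measurable_const] by blast

lemma bounded_measurable_diff:
  assumes "bounded_measurable f" "bounded_measurable g"
  shows "bounded_measurable (\<lambda>t. f t - g t)"
  using bounded_measurable_add[OF assms(1) bounded_measurable_cmult[OF assms(2), of "-1"]] by simp

lemma bounded_measurable_cnj: "bounded_measurable f \<Longrightarrow> bounded_measurable (\<lambda>t. cnj (f t))"
  unfolding bounded_measurable_def
  by (auto intro: measurable_compose[OF _ borel_measurable_continuous_onI[OF continuous_on_cnj[OF continuous_on_id]]])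

lemma bounded_measurable_sum:
  "finite I \<Longrightarrow> (\<And>i. i \<in> I \<Longrightarrow> bounded_measurable (f i)) \<Longrightarrow> bounded_measurable (\<lambda>t. \<Sum>i\<in>I. f i t)"
  by (induction I rule: finite_induct) (auto intro: bounded_measurable_const bounded_measurable_add)

lemma bounded_measurable_trig_poly: "trig_poly S f \<Longrightarrow> bounded_measurable f"
  unfolding bounded_measurable_def using trig_poly_measurable[of S f "{0..1}"] trig_poly_bounded by auto

lemma bounded_measurable_expo: "bounded_measurable (expo n)"
  by (rule bounded_measurable_trig_poly[OF trig_poly_expo[of n UNIV]]) simp

lemma bounded_measurable_indicator:
  assumes "E \<in> sets lebesgue"
  shows "bounded_measurable (indicator E)"
proof -
  have "(indicator E :: real \<Rightarrow> complex) \<in> borel_measurable lebesgue01"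
    using assms by (intro measurable_restrict_space1 borel_measurable_indicator)
  moreover have "cmod (indicator E t :: complex) \<le> 1" for t
    by (simp add: indicator_def)
  ultimately show ?thesis
    unfolding bounded_measurable_def by blast
qed

lemma bounded_measurable_trig_approx: "bounded_measurable f \<Longrightarrow> trig_approx UNIV lebesgue01 f"
proof -
  assume f: "bounded_measurable f"
  then obtain C where C: "\<And>t. cmod (f t) \<le> C"
    unfolding bounded_measurable_def by blast
  have "(\<integral>\<^sup>+t. ennreal ((cmod (f t))\<^sup>2) \<partial>lebesgue01) \<le> ennreal (C\<^sup>2)"
    using L2_sqdist_le_uniform[of lebesgue01 f "\<lambda>_. 0" C] C emeasure_lebesgue01
    by (simp add: L2_sqdist_def)
  then show ?thesis
    using f unfolding bounded_measurable_def
    by (intro trig_approx_L2) (auto simp: order_le_less_trans)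
qed

definition inner01 :: "(real \<Rightarrow> complex) \<Rightarrow> (real \<Rightarrow> complex) \<Rightarrow> complex" where
  "inner01 f g = integral\<^sup>L lebesgue01 (\<lambda>t. f t * cnj (g t))"

lemma integrable_inner01:
  "bounded_measurable f \<Longrightarrow> bounded_measurable g \<Longrightarrow> integrable lebesgue01 (\<lambda>t. f t * cnj (g t))"
  by (intro bounded_measurable_integrable bounded_measurable_mult bounded_measurable_cnj)

lemma inner01_diff_left:
  "bounded_measurable f \<Longrightarrow> bounded_measurable g \<Longrightarrow> bounded_measurable h \<Longrightarrow>
    inner01 (\<lambda>t. f t - g t) h = inner01 f h - inner01 g h"
  unfolding inner01_def left_diff_distrib by (intro Bochner_Integration.integral_diff integrable_inner01)

lemma inner01_cmult_left: "inner01 (\<lambda>t. a * f t) h = a * inner01 f h"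
  unfolding inner01_def by (simp add: mult.assoc)

lemma inner01_sum_left:
  "(\<And>i. i \<in> I \<Longrightarrow> bounded_measurable (f i)) \<Longrightarrow> bounded_measurable h \<Longrightarrow>
    inner01 (\<lambda>t. \<Sum>i\<in>I. f i t) h = (\<Sum>i\<in>I. inner01 (f i) h)"
  unfolding inner01_def sum_distrib_right by (intro Bochner_Integration.integral_sum integrable_inner01)

lemma inner01_cmult_right: "inner01 f (\<lambda>t. a * g t) = cnj a * inner01 f g"
  unfolding inner01_def by (simp add: algebra_simps)

lemma inner01_sum_right:
  "(\<And>i. i \<in> I \<Longrightarrow> bounded_measurable (g i)) \<Longrightarrow> bounded_measurable f \<Longrightarrow>
    inner01 f (\<lambda>t. \<Sum>i\<in>I. g i t) = (\<Sum>i\<in>I. inner01 f (g i))"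
  unfolding inner01_def cnj_sum sum_distrib_left by (intro Bochner_Integration.integral_sum integrable_inner01)

lemma norm_inner01_le:
  assumes "bounded_measurable h"
  shows "ennreal (cmod (inner01 h (expo k))) \<le> (\<integral>\<^sup>+t. ennreal (cmod (h t)) \<partial>lebesgue01)"
  using integral_norm_bound_ennreal[OF integrable_inner01[OF assms bounded_measurable_expo]]
  by (simp add: inner01_def norm_mult)

lemma integral_expo:
  assumes "m \<noteq> 0"
  shows "integral\<^sup>L lebesgue01 (expo m) = 0"
proof -
  define a where "a = - (2 * of_real pi * \<i> * of_int m :: complex)"
  have "a \<noteq> 0"
    using assms by (simp add: a_def)
  have expo_eq: "expo m = (\<lambda>t. exp (a * complex_of_real t))"
    unfolding expo_def a_def by (rule ext) (simp add: algebra_simps)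
  have "integral\<^sup>L lebesgue01 (expo m) = integral {0..1} (expo m)"
    by (intro lebesgue_integral_eq_integral bounded_measurable_integrable bounded_measurable_expo) simp
  also have "\<dots> = (exp (a * of_real 1) - 1) / a"
    unfolding expo_eq by (rule integral_exp) (use \<open>a \<noteq> 0\<close> in auto)
  also have "exp (a * of_real 1) = 1"
    unfolding exp_eq_1 a_def by (auto intro!: exI[of _ "- m"])
  finally show ?thesis by simp
qed

lemma inner01_expo: "inner01 (expo j) (expo k) = (if j = k then 1 else 0)"
proof -
  have "inner01 (expo j) (expo k) = integral\<^sup>L lebesgue01 (expo (j - k))"
    unfolding inner01_def cnj_expo expo_add by simp
  also have "\<dots> = (if j = k then 1 else 0)"
  proof (cases "j = k")
    case True
    have "expo 0 = (\<lambda>t. 1)"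
      by (rule ext) simp
    then show ?thesis
      using True emeasure_lebesgue01 by (simp add: measure_def)
  next
    case False
    then show ?thesis
      using integral_expo[of "j - k"] by simp
  qed
  finally show ?thesis .
qed

lemma inner01_trig_sum_expo:
  assumes "finite G" "k \<in> G"
  shows "inner01 (\<lambda>t. \<Sum>j\<in>G. c j * expo j t) (expo k) = c k"
proof -
  have "inner01 (\<lambda>t. \<Sum>j\<in>G. c j * expo j t) (expo k) = (\<Sum>j\<in>G. inner01 (\<lambda>t. c j * expo j t) (expo k))"
    by (rule inner01_sum_left) (auto intro: bounded_measurable_cmult bounded_measurable_expo)
  also have "\<dots> = (\<Sum>j\<in>G. if j = k then c j else 0)"
    by (intro sum.cong refl) (simp add: inner01_cmult_left inner01_expo)
  finally show ?thesis
    using assms by simp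
qed

section \<open>Biorthogonal systems supported in a set of positive measure\<close>

definition biorthogonal_on :: "real set \<Rightarrow> int set \<Rightarrow> (int \<Rightarrow> real \<Rightarrow> complex) \<Rightarrow> bool" where
  "biorthogonal_on B F \<psi> \<longleftrightarrow>
     (\<forall>m\<in>F. bounded_measurable (\<psi> m) \<and> (\<forall>t. t \<notin> B \<longrightarrow> \<psi> m t = 0)) \<and>
     (\<forall>m\<in>F. \<forall>k\<in>F. inner01 (\<psi> m) (expo k) = (if m = k then 1 else 0))"

lemma inner01_biorthogonal_correction:
  assumes \<psi>: "biorthogonal_on B F \<psi>" and \<rho>: "bounded_measurable \<rho>"
  shows "inner01 (\<lambda>t. \<rho> t - (\<Sum>m\<in>F. inner01 \<rho> (expo m) * \<psi> m t)) (expo k) =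
    inner01 \<rho> (expo k) - (\<Sum>m\<in>F. inner01 \<rho> (expo m) * inner01 (\<psi> m) (expo k))"
proof -
  have \<psi>_bm: "\<And>m. m \<in> F \<Longrightarrow> bounded_measurable (\<lambda>t. inner01 \<rho> (expo m) * \<psi> m t)"
    using \<psi> unfolding biorthogonal_on_def by (auto intro: bounded_measurable_cmult)
  have "inner01 (\<lambda>t. \<rho> t - (\<Sum>m\<in>F. inner01 \<rho> (expo m) * \<psi> m t)) (expo k) =
      inner01 \<rho> (expo k) - inner01 (\<lambda>t. \<Sum>m\<in>F. inner01 \<rho> (expo m) * \<psi> m t) (expo k)"
  proof (cases "finite F")
    case True
    then show ?thesis
      by (intro inner01_diff_left \<rho> bounded_measurable_sum \<psi>_bm bounded_measurable_expo)
  next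
    case False
    then show ?thesis
      by (simp add: inner01_def)
  qed
  also have "inner01 (\<lambda>t. \<Sum>m\<in>F. inner01 \<rho> (expo m) * \<psi> m t) (expo k) =
      (\<Sum>m\<in>F. inner01 \<rho> (expo m) * inner01 (\<psi> m) (expo k))"
    by (simp add: inner01_sum_left[OF \<psi>_bm bounded_measurable_expo] inner01_cmult_left)
  finally show ?thesis .
qed

lemma inner01_biorthogonal_correction_eq_0:
  assumes "biorthogonal_on B F \<psi>" "finite F" "bounded_measurable \<rho>" "k \<in> F"
  shows "inner01 (\<lambda>t. \<rho> t - (\<Sum>m\<in>F. inner01 \<rho> (expo m) * \<psi> m t)) (expo k) = 0"
proof -
  have "(\<Sum>m\<in>F. inner01 \<rho> (expo m) * inner01 (\<psi> m) (expo k)) = (\<Sum>m\<in>F. if m = k then inner01 \<rho> (expo m) else 0)"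
    using assms(1,4) unfolding biorthogonal_on_def by (intro sum.cong refl) simp
  then show ?thesis
    using inner01_biorthogonal_correction[OF assms(1,3), of k] assms(2,4) by simp
qed

lemma AE_zero_if_inner01_indicator_self_eq_0:
  assumes B: "B \<in> sets lebesgue" and q: "bounded_measurable q"
    and zero: "inner01 (\<lambda>t. indicator B t * q t) q = 0"
  shows "AE t in lebesgue. t \<in> B \<inter> {0..1} \<longrightarrow> q t = 0"
proof -
  obtain C where C: "\<And>t. cmod (q t) \<le> C" and q_meas: "q \<in> borel_measurable lebesgue01"
    using q unfolding bounded_measurable_def by blast
  have B_meas: "(indicator B :: real \<Rightarrow> real) \<in> borel_measurable lebesgue01"
    using B by (intro measurable_restrict_space1 borel_measurable_indicator)
  have int: "integrable lebesgue01 (\<lambda>t. indicator B t * (cmod (q t))\<^sup>2)"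
  proof (rule finite_measure.integrable_const_bound[OF finite_measure_lebesgue01, where B = "C\<^sup>2"])
    show "AE t in lebesgue01. norm (indicator B t * (cmod (q t))\<^sup>2) \<le> C\<^sup>2"
    proof (rule AE_I2)
      fix t
      have "(cmod (q t))\<^sup>2 \<le> C\<^sup>2"
        using C[of t] by (intro power_mono) auto
      then show "norm (indicator B t * (cmod (q t))\<^sup>2) \<le> C\<^sup>2"
        by (simp add: indicator_def)
    qed
    show "(\<lambda>t. indicator B t * (cmod (q t))\<^sup>2) \<in> borel_measurable lebesgue01"
      using B_meas q_meas by measurable
  qed
  have "(\<lambda>t. indicator B t * q t * cnj (q t)) = (\<lambda>t. complex_of_real (indicator B t * (cmod (q t))\<^sup>2))"
    by (rule ext) (simp add: indicator_def mult.assoc flip: complex_norm_square)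
  then have "inner01 (\<lambda>t. indicator B t * q t) q = complex_of_real (integral\<^sup>L lebesgue01 (\<lambda>t. indicator B t * (cmod (q t))\<^sup>2))"
    unfolding inner01_def by (simp only: integral_complex_of_real)
  then have "integral\<^sup>L lebesgue01 (\<lambda>t. indicator B t * (cmod (q t))\<^sup>2) = 0"
    using zero by simp
  then have "AE t in lebesgue01. indicator B t * (cmod (q t))\<^sup>2 = 0"
    using integral_nonneg_eq_0_iff_AE[OF int] by simp
  then have "AE t in lebesgue. t \<in> {0..1} \<longrightarrow> indicator B t * (cmod (q t))\<^sup>2 = 0"
    by (subst (asm) AE_restrict_space_iff) auto
  then show ?thesis
    by eventually_elim (auto simp: indicator_def)
qed

lemma inner01_indicator_trig_sum_nonzero:
  assumes B: "B \<in> sets lebesgue" "B \<subseteq> {0..1}" "emeasure lebesgue B \<noteq> 0"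
    and F: "finite F" "m \<in> F" "c m \<noteq> 0"
    and q: "q = (\<lambda>t. \<Sum>k\<in>F. c k * expo k t)"
  shows "inner01 (\<lambda>t. indicator B t * q t) q \<noteq> 0"
proof
  assume "inner01 (\<lambda>t. indicator B t * q t) q = 0"
  moreover have "bounded_measurable q"
    unfolding q by (intro bounded_measurable_sum F(1) bounded_measurable_cmult bounded_measurable_expo)
  ultimately have AE_zero: "AE t in lebesgue. t \<in> B \<inter> {0..1} \<longrightarrow> q t = 0"
    using B(1) by (intro AE_zero_if_inner01_indicator_self_eq_0)
  have "finite {t\<in>{0..1}. q t = 0}"
    unfolding q by (rule trig_sum_zeros_finite[of F m c, OF F])
  then have AE_nonzero: "AE t in lebesgue. t \<notin> {t\<in>{0..1}. q t = 0}"
    by (intro AE_not_in null_sets_completionI finite_imp_null_set_lborel)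
  from AE_zero AE_nonzero have "AE t in lebesgue. t \<notin> B"
    by eventually_elim (use B(2) in auto)
  then have "B \<in> null_sets lebesgue"
    using AE_iff_null_sets[OF B(1)] by simp
  then show False
    using B(3) by (simp add: null_setsD1)
qed

lemma exists_dual_function:
  assumes B: "B \<in> sets lebesgue" "B \<subseteq> {0..1}" "emeasure lebesgue B \<noteq> 0"
    and \<psi>: "biorthogonal_on B F \<psi>" and F: "finite F" "m0 \<notin> F"
  shows "\<exists>\<eta>. bounded_measurable \<eta> \<and> (\<forall>t. t \<notin> B \<longrightarrow> \<eta> t = 0) \<and>
    (\<forall>k\<in>F. inner01 \<eta> (expo k) = 0) \<and> inner01 \<eta> (expo m0) = 1"
proof -
  have \<psi>_bm: "\<And>m. m \<in> F \<Longrightarrow> bounded_measurable (\<psi> m)"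
    and \<psi>_supp: "\<And>m t. m \<in> F \<Longrightarrow> t \<notin> B \<Longrightarrow> \<psi> m t = 0"
    using \<psi> unfolding biorthogonal_on_def by blast+
  (* c is chosen so that the correction \<eta> of \<rho> = 1_B q satisfies <\<eta>, e_m0> = <\<rho>, q> = \<integral>_B |q|^2 *)
  define c where "c k = (if k = m0 then 1 else - cnj (inner01 (\<psi> k) (expo m0)))" for k
  define q where "q = (\<lambda>t. \<Sum>k\<in>insert m0 F. c k * expo k t)"
  define \<rho> where "\<rho> = (\<lambda>t. indicator B t * q t)"
  define \<eta> where "\<eta> = (\<lambda>t. \<rho> t - (\<Sum>m\<in>F. inner01 \<rho> (expo m) * \<psi> m t))"
  have q_bm: "bounded_measurable q"
    unfolding q_def using F(1) by (intro bounded_measurable_sum bounded_measurable_cmult bounded_measurable_expo) auto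
  have \<rho>_bm: "bounded_measurable \<rho>"
    unfolding \<rho>_def by (intro bounded_measurable_mult bounded_measurable_indicator B(1) q_bm)
  have "inner01 \<rho> q = (\<Sum>k\<in>insert m0 F. cnj (c k) * inner01 \<rho> (expo k))"
    unfolding q_def using F(1)
    by (simp add: inner01_sum_right[OF _ \<rho>_bm] bounded_measurable_cmult bounded_measurable_expo inner01_cmult_right)
  also have "\<dots> = inner01 \<rho> (expo m0) + (\<Sum>m\<in>F. - (inner01 \<rho> (expo m) * inner01 (\<psi> m) (expo m0)))"
    using F by (simp add: c_def) (intro sum.cong refl; auto)
  also have "\<dots> = inner01 \<rho> (expo m0) - (\<Sum>m\<in>F. inner01 \<rho> (expo m) * inner01 (\<psi> m) (expo m0))"
    by (simp add: sum_negf)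
  also have "\<dots> = inner01 \<eta> (expo m0)"
    unfolding \<eta>_def by (rule inner01_biorthogonal_correction[OF \<psi> \<rho>_bm, symmetric])
  finally have "inner01 \<rho> q = inner01 \<eta> (expo m0)" .
  moreover have "inner01 \<rho> q \<noteq> 0"
    unfolding \<rho>_def
    by (rule inner01_indicator_trig_sum_nonzero[where m = m0, OF B _ _ _ q_def]) (use F(1) in \<open>auto simp: c_def\<close>)
  ultimately have "inner01 \<eta> (expo m0) \<noteq> 0"
    by simp
  have "bounded_measurable \<eta>"
    unfolding \<eta>_def using F(1)
    by (intro bounded_measurable_diff \<rho>_bm bounded_measurable_sum bounded_measurable_cmult \<psi>_bm)
  moreover have "\<eta> t = 0" if "t \<notin> B" for t
    using that \<psi>_supp unfolding \<eta>_def \<rho>_def by simp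
  moreover have "inner01 \<eta> (expo k) = 0" if "k \<in> F" for k
    unfolding \<eta>_def using \<psi> F(1) \<rho>_bm that by (rule inner01_biorthogonal_correction_eq_0)
  ultimately show ?thesis
    using \<open>inner01 \<eta> (expo m0) \<noteq> 0\<close>
    by (intro exI[of _ "\<lambda>t. inverse (inner01 \<eta> (expo m0)) * \<eta> t"])
      (auto simp: inner01_cmult_left intro: bounded_measurable_cmult)
qed

lemma biorthogonal_on_exists:
  assumes B: "B \<in> sets lebesgue" "B \<subseteq> {0..1}" "emeasure lebesgue B \<noteq> 0" and "finite F"
  shows "\<exists>\<psi>. biorthogonal_on B F \<psi>"
  using \<open>finite F\<close>
proof (induction F rule: finite_induct)
  case empty
  then show ?case
    by (auto simp: biorthogonal_on_def)
next
  case (insert m0 F)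
  obtain \<psi> where \<psi>: "biorthogonal_on B F \<psi>"
    using insert.IH by blast
  obtain \<eta> where \<eta>: "bounded_measurable \<eta>" "\<And>t. t \<notin> B \<Longrightarrow> \<eta> t = 0"
    "\<And>k. k \<in> F \<Longrightarrow> inner01 \<eta> (expo k) = 0" "inner01 \<eta> (expo m0) = 1"
    using exists_dual_function[OF B \<psi> insert.hyps] by blast
  define \<psi>' where "\<psi>' m = (if m = m0 then \<eta> else (\<lambda>t. \<psi> m t - inner01 (\<psi> m) (expo m0) * \<eta> t))" for m
  have \<psi>_bm: "\<And>m. m \<in> F \<Longrightarrow> bounded_measurable (\<psi> m)"
    using \<psi> unfolding biorthogonal_on_def by blast
  have "inner01 (\<psi>' m) (expo k) = (if m = k then 1 else 0)" if "m \<in> insert m0 F" "k \<in> insert m0 F" for m k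
  proof (cases "m = m0")
    case True
    then show ?thesis
      using that \<eta>(3,4) insert.hyps(2) unfolding \<psi>'_def by auto
  next
    case False
    then have "m \<in> F"
      using that(1) by simp
    then have "inner01 (\<psi>' m) (expo k) = inner01 (\<psi> m) (expo k) - inner01 (\<psi> m) (expo m0) * inner01 \<eta> (expo k)"
      unfolding \<psi>'_def using False
      by (simp add: inner01_diff_left[OF \<psi>_bm bounded_measurable_cmult[OF \<eta>(1)] bounded_measurable_expo]
          inner01_cmult_left)
    then show ?thesis
      using \<psi> \<open>m \<in> F\<close> that(2) \<eta>(3,4) insert.hyps(2) unfolding biorthogonal_on_def by auto
  qed
  moreover have "bounded_measurable (\<psi>' m) \<and> (\<forall>t. t \<notin> B \<longrightarrow> \<psi>' m t = 0)" if "m \<in> insert m0 F" for m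
    using that \<psi> \<eta>(1,2) unfolding \<psi>'_def biorthogonal_on_def
    by (auto intro: bounded_measurable_diff bounded_measurable_cmult)
  ultimately show ?case
    unfolding biorthogonal_on_def by blast
qed

section \<open>Approximation avoiding finitely many frequencies\<close>

lemma nn_integral_norm_le_of_sq:
  assumes M: "emeasure M (space M) \<le> 1" and s: "s > 0"
    and h[measurable]: "h \<in> borel_measurable M"
    and sq: "(\<integral>\<^sup>+t. ennreal ((cmod (h t))\<^sup>2) \<partial>M) \<le> ennreal (s\<^sup>2)"
  shows "(\<integral>\<^sup>+t. ennreal (cmod (h t)) \<partial>M) \<le> ennreal s"
proof -
  have am_gm: "y \<le> s / 2 + 1 / (2 * s) * y\<^sup>2" for y :: real
  proof -
    have "2 * s * y \<le> y\<^sup>2 + s\<^sup>2"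
      using zero_le_power2[of "y - s"] by (simp add: power2_eq_square algebra_simps)
    then show ?thesis
      using s by (simp add: field_simps power2_eq_square)
  qed
  have split: "ennreal (s / 2 + 1 / (2 * s) * y) = ennreal (s / 2) + ennreal (1 / (2 * s)) * ennreal y"
    if "y \<ge> 0" for y
  proof -
    have "ennreal (s / 2 + 1 / (2 * s) * y) = ennreal (s / 2) + ennreal (1 / (2 * s) * y)"
      using s that by (intro ennreal_plus) auto
    also have "ennreal (1 / (2 * s) * y) = ennreal (1 / (2 * s)) * ennreal y"
      using s that by (intro ennreal_mult) auto
    finally show ?thesis .
  qed
  have "(\<integral>\<^sup>+t. ennreal (cmod (h t)) \<partial>M) \<le>
      (\<integral>\<^sup>+t. ennreal (s / 2) + ennreal (1 / (2 * s)) * ennreal ((cmod (h t))\<^sup>2) \<partial>M)"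
  proof (rule nn_integral_mono)
    fix t
    have "ennreal (cmod (h t)) \<le> ennreal (s / 2 + 1 / (2 * s) * (cmod (h t))\<^sup>2)"
      by (rule ennreal_leI[OF am_gm])
    also have "\<dots> = ennreal (s / 2) + ennreal (1 / (2 * s)) * ennreal ((cmod (h t))\<^sup>2)"
      by (simp only: split zero_le_power2)
    finally show "ennreal (cmod (h t)) \<le> ennreal (s / 2) + ennreal (1 / (2 * s)) * ennreal ((cmod (h t))\<^sup>2)" .
  qed
  also have "\<dots> = ennreal (s / 2) * emeasure M (space M) + ennreal (1 / (2 * s)) * (\<integral>\<^sup>+t. ennreal ((cmod (h t))\<^sup>2) \<partial>M)"
    by (simp add: nn_integral_add nn_integral_cmult)
  also have "\<dots> \<le> ennreal (s / 2) * 1 + ennreal (1 / (2 * s)) * ennreal (s\<^sup>2)"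
    using M sq by (intro add_mono mult_left_mono) auto
  also have "\<dots> = ennreal (s / 2 + 1 / (2 * s) * s\<^sup>2)"
    by (simp only: split zero_le_power2 mult_1_right)
  also have "s / 2 + 1 / (2 * s) * s\<^sup>2 = s"
    using s by (simp add: field_simps power2_eq_square)
  finally show ?thesis .
qed

lemma norm_coeff_le_if_orthogonal:
  assumes \<phi>: "bounded_measurable \<phi>" "inner01 \<phi> (expo k) = 0"
    and G: "finite G" "k \<in> G" and "s > 0"
    and close: "L2_sqdist lebesgue01 \<phi> (\<lambda>t. \<Sum>j\<in>G. c j * expo j t) \<le> ennreal (s\<^sup>2)"
  shows "cmod (c k) \<le> s"
proof -
  define P where "P = (\<lambda>t. \<Sum>j\<in>G. c j * expo j t)"
  have P: "bounded_measurable P"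
    unfolding P_def using G(1) by (intro bounded_measurable_sum bounded_measurable_cmult bounded_measurable_expo)
  have "c k = inner01 (\<lambda>t. P t - \<phi> t) (expo k)"
    using inner01_trig_sum_expo[OF G, of c] inner01_diff_left[OF P \<phi>(1) bounded_measurable_expo] \<phi>(2)
    by (simp add: P_def)
  then have "ennreal (cmod (c k)) \<le> (\<integral>\<^sup>+t. ennreal (cmod (P t - \<phi> t)) \<partial>lebesgue01)"
    using norm_inner01_le[OF bounded_measurable_diff[OF P \<phi>(1)]] by simp
  also have "\<dots> \<le> ennreal s"
  proof (rule nn_integral_norm_le_of_sq[OF _ \<open>s > 0\<close>])
    show "(\<integral>\<^sup>+t. ennreal ((cmod (P t - \<phi> t))\<^sup>2) \<partial>lebesgue01) \<le> ennreal (s\<^sup>2)"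
      using close unfolding L2_sqdist_def P_def by (simp add: norm_minus_commute)
  qed (use emeasure_lebesgue01 P \<phi>(1) in \<open>auto simp: bounded_measurable_def\<close>)
  finally show ?thesis
    using \<open>s > 0\<close> by simp
qed

lemma L2_sqdist_drop_terms_le:
  assumes "finite G" "finite F" "s \<ge> 0" and small: "\<And>k. k \<in> G \<inter> F \<Longrightarrow> cmod (c k) \<le> s"
  shows "L2_sqdist lebesgue01 (\<lambda>t. \<Sum>k\<in>G. c k * expo k t) (\<lambda>t. \<Sum>k\<in>G - F. c k * expo k t)
    \<le> ennreal ((real (card F) * s)\<^sup>2)"
proof (rule L2_sqdist_le_uniform)
  fix t
  have "(\<Sum>k\<in>G. c k * expo k t) = (\<Sum>k\<in>G \<inter> F. c k * expo k t) + (\<Sum>k\<in>G - F. c k * expo k t)"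
    by (rule sum.Int_Diff[OF \<open>finite G\<close>])
  then have "cmod ((\<Sum>k\<in>G. c k * expo k t) - (\<Sum>k\<in>G - F. c k * expo k t)) = cmod (\<Sum>k\<in>G \<inter> F. c k * expo k t)"
    by simp
  also have "\<dots> \<le> (\<Sum>k\<in>G \<inter> F. cmod (c k * expo k t))"
    by (rule norm_sum)
  also have "\<dots> \<le> real (card (G \<inter> F)) * s"
    using small by (intro sum_bounded_above) (simp add: norm_mult)
  also have "\<dots> \<le> real (card F) * s"
    using assms by (intro mult_right_mono) (auto intro: card_mono)
  finally show "cmod ((\<Sum>k\<in>G. c k * expo k t) - (\<Sum>k\<in>G - F. c k * expo k t)) \<le> real (card F) * s" .
qed (use emeasure_lebesgue01 in simp)

lemma trig_approx_avoiding_orthogonal: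
  assumes \<phi>: "bounded_measurable \<phi>" and F: "finite F"
    and orth: "\<And>k. k \<in> F \<Longrightarrow> inner01 \<phi> (expo k) = 0"
  shows "trig_approx (- F) lebesgue01 \<phi>"
  unfolding trig_approx_def
proof (intro allI impI)
  fix \<epsilon> :: real
  assume "\<epsilon> > 0"
  define K where "K = real (card F)"
  define s where "s = sqrt (\<epsilon> / (4 * (1 + K\<^sup>2)))"
  have "1 + K\<^sup>2 > 0"
    by (simp add: add_pos_nonneg)
  then have "s > 0" and "s\<^sup>2 = \<epsilon> / (4 * (1 + K\<^sup>2))"
    unfolding s_def using \<open>\<epsilon> > 0\<close> by simp_all
  have "2 * s\<^sup>2 + 2 * (K * s)\<^sup>2 = 2 * (1 + K\<^sup>2) * s\<^sup>2"
    by (simp add: power_mult_distrib algebra_simps)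
  also have "\<dots> = \<epsilon> / 2"
    unfolding \<open>s\<^sup>2 = _\<close> using \<open>1 + K\<^sup>2 > 0\<close> by (simp add: field_simps)
  finally have s_sq: "2 * s\<^sup>2 + 2 * (K * s)\<^sup>2 = \<epsilon> / 2" .
  have "s\<^sup>2 > 0"
    using \<open>s > 0\<close> by simp
  then obtain P where P: "trig_poly UNIV P" "L2_sqdist lebesgue01 \<phi> P < ennreal (s\<^sup>2)"
    using bounded_measurable_trig_approx[OF \<phi>, unfolded trig_approx_def, rule_format, OF \<open>s\<^sup>2 > 0\<close>] by blast
  then obtain G c where G: "finite G" "P = (\<lambda>t. \<Sum>k\<in>G. c k * expo k t)"
    unfolding trig_poly_def by auto
  define P' where "P' = (\<lambda>t. \<Sum>k\<in>G - F. c k * expo k t)"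
  have P': "trig_poly (- F) P'"
    unfolding trig_poly_def P'_def using G(1) by (intro exI[of _ "G - F"] exI[of _ c]) auto
  have meas: "\<phi> \<in> borel_measurable lebesgue01" "P \<in> borel_measurable lebesgue01" "P' \<in> borel_measurable lebesgue01"
    using \<phi> P(1) P' unfolding bounded_measurable_def by (auto intro: trig_poly_measurable)
  have "cmod (c k) \<le> s" if "k \<in> G \<inter> F" for k
    using that P(2) G \<open>s > 0\<close> by (intro norm_coeff_le_if_orthogonal[OF \<phi> orth]) auto
  then have "L2_sqdist lebesgue01 P P' \<le> ennreal ((K * s)\<^sup>2)"
    unfolding G(2) P'_def K_def using G(1) F \<open>s > 0\<close> by (intro L2_sqdist_drop_terms_le) auto
  then have "L2_sqdist lebesgue01 \<phi> P' \<le> 2 * ennreal (s\<^sup>2) + 2 * ennreal ((K * s)\<^sup>2)"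
    using L2_sqdist_triangle[OF meas] P(2) by (meson add_mono dual_order.trans less_imp_le mult_left_mono zero_le)
  also have "\<dots> = ennreal (2 * s\<^sup>2 + 2 * (K * s)\<^sup>2)"
    by (simp add: ennreal_plus ennreal_mult)
  also have "\<dots> < ennreal \<epsilon>"
    unfolding s_sq using \<open>\<epsilon> > 0\<close> by (simp add: ennreal_less_iff)
  finally show "\<exists>g. trig_poly (- F) g \<and> L2_sqdist lebesgue01 \<phi> g < ennreal \<epsilon>"
    using P' by blast
qed

lemma emeasure_Icc_diff_nonzero:
  fixes A :: "real set"
  assumes "A \<in> sets lebesgue" "emeasure lebesgue A < 1"
  shows "emeasure lebesgue ({0..1} - A) \<noteq> 0"
proof
  assume zero: "emeasure lebesgue ({0..1} - A) = 0"
  have "emeasure lebesgue {0..1::real} \<le> emeasure lebesgue (A \<union> ({0..1} - A))"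
    by (rule emeasure_mono) (use assms in auto)
  also have "\<dots> \<le> emeasure lebesgue A + emeasure lebesgue ({0..1} - A)"
    by (rule emeasure_subadditive) (use assms in auto)
  also have "\<dots> < 1"
    using assms(2) zero by simp
  finally show False
    by simp
qed

lemma trig_approx_expo_avoiding:
  assumes A: "A \<in> sets lebesgue" "A \<subseteq> {0..1}" "emeasure lebesgue A < 1" and F: "finite F"
  shows "trig_approx (- F) (lebesgue_on A) (expo n)"
proof -
  define B where "B = {0..1} - A"
  have B: "B \<in> sets lebesgue" "B \<subseteq> {0..1}" "emeasure lebesgue B \<noteq> 0"
    using A emeasure_Icc_diff_nonzero[OF A(1,3)] by (auto simp: B_def)
  then obtain \<psi> where \<psi>: "biorthogonal_on B F \<psi>"
    using biorthogonal_on_exists[OF B F] by blast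
  then have \<psi>_bm: "\<And>m. m \<in> F \<Longrightarrow> bounded_measurable (\<psi> m)"
    and \<psi>_supp: "\<And>m t. m \<in> F \<Longrightarrow> t \<notin> B \<Longrightarrow> \<psi> m t = 0"
    unfolding biorthogonal_on_def by blast+
  define \<rho> where "\<rho> = (\<lambda>t. indicator A t * expo n t)"
  define \<phi> where "\<phi> = (\<lambda>t. \<rho> t - (\<Sum>m\<in>F. inner01 \<rho> (expo m) * \<psi> m t))"
  have \<rho>_bm: "bounded_measurable \<rho>"
    unfolding \<rho>_def by (intro bounded_measurable_mult bounded_measurable_indicator A(1) bounded_measurable_expo)
  have "bounded_measurable \<phi>"
    unfolding \<phi>_def using F by (intro bounded_measurable_diff \<rho>_bm bounded_measurable_sum bounded_measurable_cmult \<psi>_bm)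
  moreover have "inner01 \<phi> (expo k) = 0" if "k \<in> F" for k
    unfolding \<phi>_def using \<psi> F \<rho>_bm that by (rule inner01_biorthogonal_correction_eq_0)
  ultimately have approx01: "trig_approx (- F) lebesgue01 \<phi>"
    by (rule trig_approx_avoiding_orthogonal[OF _ F])
  have "trig_approx (- F) (lebesgue_on A) \<phi>"
    by (rule trig_approx_restrict[OF A(1) _ A(2) approx01]) simp
  moreover have "expo n t = \<phi> t" if "t \<in> space (lebesgue_on A)" for t
    using that \<psi>_supp by (simp add: \<phi>_def \<rho>_def B_def)
  ultimately show ?thesis
    by (rule trig_approx_cong[rotated])
qed

section \<open>Disjoint complete systems\<close>

lemma complete_L2_if_trig_approx_expo:
  assumes A: "A \<in> sets lebesgue" "A \<subseteq> {0..1}"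
    and expo: "\<And>n. trig_approx Z (lebesgue_on A) (expo n)"
  shows "complete_L2 A Z"
  unfolding complete_L2_def
proof (rule allI, rule impI)
  fix f :: "real \<Rightarrow> complex"
  assume f: "f \<in> borel_measurable (lebesgue_on A) \<and> (\<integral>\<^sup>+t. ennreal ((cmod (f t))\<^sup>2) \<partial>lebesgue_on A) < \<infinity>"
  then have "trig_approx UNIV (lebesgue_on A) f"
    using A by (intro trig_approx_L2) auto
  with f have "trig_approx Z (lebesgue_on A) f"
    using trig_approx_trans[OF A(1), of f UNIV Z] expo by blast
  then show "\<forall>\<epsilon>>0. \<exists>F c. finite F \<and> F \<subseteq> Z \<and>
      (\<integral>\<^sup>+t. ennreal ((cmod (f t - (\<Sum>n\<in>F. c n * expo n t)))\<^sup>2) \<partial>lebesgue_on A) < ennreal \<epsilon>"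
    unfolding trig_approx_def trig_poly_def L2_sqdist_def by fastforce
qed

lemma disjoint_family_choice_nat:
  assumes "\<And>k U. finite U \<Longrightarrow> \<exists>G. finite G \<and> G \<inter> U = {} \<and> P k G"
  shows "\<exists>G :: nat \<Rightarrow> 'a set. disjoint_family G \<and> (\<forall>k. P k (G k))"
proof -
  define pick where "pick k U = (SOME G. finite G \<and> G \<inter> U = {} \<and> P k G)" for k U
  have pick: "finite (pick k U) \<and> pick k U \<inter> U = {} \<and> P k (pick k U)" if "finite U" for k U
    unfolding pick_def by (rule someI_ex[OF assms[OF that]])
  define used where "used = rec_nat {} (\<lambda>k U. U \<union> pick k U)"
  have used_Suc: "used (Suc k) = used k \<union> pick k (used k)" for k
    by (simp add: used_def)
  have finite_used: "finite (used k)" for k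
  proof (induction k)
    case 0
    then show ?case by (simp add: used_def)
  next
    case (Suc k)
    then show ?case by (simp add: used_Suc pick)
  qed
  have used_mono: "used k \<subseteq> used l" if "k \<le> l" for k l
    using lift_Suc_mono_le[of used, OF _ that] used_Suc by blast
  have disj: "pick k (used k) \<inter> pick l (used l) = {}" if "k < l" for k l
  proof -
    have "pick k (used k) \<subseteq> used l"
      using used_mono[of "Suc k" l] that used_Suc by auto
    then show ?thesis
      using pick[OF finite_used, of l l] by blast
  qed
  have "disjoint_family (\<lambda>k. pick k (used k))"
    unfolding disjoint_family_on_def
  proof (intro ballI impI)
    fix k l :: nat
    assume "k \<noteq> l"
    then consider "k < l" | "l < k"
      by linarith
    then show "pick k (used k) \<inter> pick l (used l) = {}"
      by cases (auto dest: disj)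
  qed
  then show ?thesis
    using pick[OF finite_used] by blast
qed

lemma disjoint_family_choice:
  fixes P :: "'i::countable \<Rightarrow> 'a set \<Rightarrow> bool"
  assumes "\<And>i U. finite U \<Longrightarrow> \<exists>G. finite G \<and> G \<inter> U = {} \<and> P i G"
  shows "\<exists>G. disjoint_family G \<and> (\<forall>i. P i (G i))"
proof -
  obtain G :: "nat \<Rightarrow> 'a set" where "disjoint_family G" "\<forall>k. P (from_nat k) (G k)"
    using disjoint_family_choice_nat[of "\<lambda>k. P (from_nat k)"] assms by blast
  moreover have "disjoint_family (\<lambda>i. G (to_nat i))"
    using \<open>disjoint_family G\<close> unfolding disjoint_family_on_def by simp
  moreover have "\<forall>i. P i (G (to_nat i))"
    using \<open>\<forall>k. P (from_nat k) (G k)\<close> by (metis from_nat_to_nat)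
  ultimately show ?thesis
    by blast
qed

lemma disjoint_family_UN_fibres:
  fixes f :: "'a \<Rightarrow> 'b"
  assumes "disjoint_family G"
  shows "disjoint_family (\<lambda>j. \<Union>k\<in>{k. f k = j}. G k)"
  unfolding disjoint_family_on_def
proof (intro ballI impI)
  fix i j :: 'b
  assume "i \<noteq> j"
  have "G k \<inter> G l = {}" if "f k = i" "f l = j" for k l
  proof -
    have "k \<noteq> l"
      using that \<open>i \<noteq> j\<close> by auto
    then show ?thesis
      using assms unfolding disjoint_family_on_def by blast
  qed
  then show "(\<Union>k\<in>{k. f k = i}. G k) \<inter> (\<Union>k\<in>{k. f k = j}. G k) = {}"
    by auto
qed

lemma exists_trig_poly_avoiding:
  assumes A: "A \<in> sets lebesgue" "A \<subseteq> {0..1}" "emeasure lebesgue A < 1"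
    and "finite U" "\<epsilon> > 0"
  shows "\<exists>G. finite G \<and> G \<inter> U = {} \<and> (\<exists>g. trig_poly G g \<and> L2_sqdist (lebesgue_on A) (expo n) g < ennreal \<epsilon>)"
proof -
  obtain g where "trig_poly (- U) g" "L2_sqdist (lebesgue_on A) (expo n) g < ennreal \<epsilon>"
    using trig_approx_expo_avoiding[OF A \<open>finite U\<close>, of n, unfolded trig_approx_def, rule_format, OF \<open>\<epsilon> > 0\<close>]
    by blast
  moreover obtain G where "finite G" "G \<subseteq> - U" "trig_poly G g"
    using \<open>trig_poly (- U) g\<close> unfolding trig_poly_def by blast
  ultimately show ?thesis
    by blast
qed

lemma trig_approx_if_inverse_Suc:
  assumes "\<And>m. \<exists>g. trig_poly S g \<and> L2_sqdist M f g < ennreal (inverse (real (Suc m)))"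
  shows "trig_approx S M f"
  unfolding trig_approx_def
proof (intro allI impI)
  fix \<epsilon> :: real
  assume "\<epsilon> > 0"
  then obtain m where "inverse (real (Suc m)) < \<epsilon>"
    using reals_Archimedean by blast
  then have "ennreal (inverse (real (Suc m))) < ennreal \<epsilon>"
    using \<open>\<epsilon> > 0\<close> by (rule ennreal_lessI[rotated])
  then show "\<exists>g. trig_poly S g \<and> L2_sqdist M f g < ennreal \<epsilon>"
    using assms[of m] by (blast intro: order_less_trans)
qed

lemma exists_disjoint_approximating_family:
  assumes A: "A \<in> sets lebesgue" "A \<subseteq> {0..1}" "emeasure lebesgue A < 1"
  shows "\<exists>G :: nat \<times> int \<times> nat \<Rightarrow> int set. disjoint_family G \<and> (\<forall>j n m.
    \<exists>g. trig_poly (G (j, n, m)) g \<and> L2_sqdist (lebesgue_on A) (expo n) g < ennreal (inverse (real (Suc m))))"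
proof -
  define close where "close i F \<longleftrightarrow> (case i of (j :: nat, n, m :: nat) \<Rightarrow>
    \<exists>g. trig_poly F g \<and> L2_sqdist (lebesgue_on A) (expo n) g < ennreal (inverse (real (Suc m))))" for i F
  have "\<exists>G. disjoint_family G \<and> (\<forall>i. close i (G i))"
  proof (rule disjoint_family_choice)
    fix i :: "nat \<times> int \<times> nat" and U :: "int set"
    assume "finite U"
    obtain j n m where i: "i = (j, n, m)"
      by (cases i) auto
    show "\<exists>F. finite F \<and> F \<inter> U = {} \<and> close i F"
      unfolding close_def i using exists_trig_poly_avoiding[OF A \<open>finite U\<close>, of "inverse (real (Suc m))" n]
      by simp
  qed
  then show ?thesis
    unfolding close_def by auto
qed

theorem lemma1:
  fixes A :: "real set"
  assumes "A \<in> sets lebesgue"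
    and "A \<subseteq> {0..1}"
    and "emeasure lebesgue A < 1"
  shows "\<exists>Z :: nat \<Rightarrow> int set. disjoint_family Z \<and> (\<forall>j. complete_L2 A (Z j))"
proof -
  obtain G :: "nat \<times> int \<times> nat \<Rightarrow> int set" where G: "disjoint_family G"
    and close: "\<And>j n m. \<exists>g. trig_poly (G (j, n, m)) g \<and>
      L2_sqdist (lebesgue_on A) (expo n) g < ennreal (inverse (real (Suc m)))"
    using exists_disjoint_approximating_family[OF assms] by blast
  define Z where "Z j = (\<Union>i\<in>{i. fst i = j}. G i)" for j
  have "trig_approx (Z j) (lebesgue_on A) (expo n)" for j n
  proof (rule trig_approx_if_inverse_Suc)
    fix m
    obtain g where "trig_poly (G (j, n, m)) g" "L2_sqdist (lebesgue_on A) (expo n) g < ennreal (inverse (real (Suc m)))"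
      using close by blast
    moreover have "G (j, n, m) \<subseteq> Z j"
      unfolding Z_def by (intro UN_upper) simp
    ultimately show "\<exists>g. trig_poly (Z j) g \<and> L2_sqdist (lebesgue_on A) (expo n) g < ennreal (inverse (real (Suc m)))"
      using trig_poly_mono by blast
  qed
  then have "complete_L2 A (Z j)" for j
    using assms by (intro complete_L2_if_trig_approx_expo) auto
  moreover have "disjoint_family Z"
    unfolding Z_def by (rule disjoint_family_UN_fibres[OF G])
  ultimately show ?thesis
    by blast
qed

end
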